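(* Let $X,Y\subseteq\mathbb{R}^{\mathbb{Z}_<}$, equipped with the metric $d(\mathbf{x},\mathbf{y})=|\mathbf{y}-\mathbf{x}|$. A function $f:X\to Y$ is $\iota$-continuous if and only if $f$ satisfies $\mathrm{ED}$.
   Context: $\mathbb{R}^{\mathbb{Z}_<}$ is the set of formal series $\sum_{i\ge -k}a_i\epsilon^i$ ($k\in\mathbb{N}\cup\{0\}$, $a_i\in\mathbb{R}$), with coefficientwise addition, Cauchy-product multiplication and lexicographic order; $|\cdot|$ is the associated absolute value. For $m\in\mathbb{N}\cup\{0\}$ let $\Delta^m=\{a\epsilon^m:a\in\mathbb{R}\}$ (with $a\ne0$ when $m\ge1$) and $\Delta^{\downarrow m}=\bigcup_{n\ge m}\Delta^n$. In a subset $Z$, $B_{\mathbf{x}}(\mathbf{r})=\{\mathbf{z}\in Z:d(\mathbf{x},\mathbf{z})<\mathbf{r}\}$, and $O\subseteq Z$ is $\iota$-open iff for every $\mathbf{x}\in O$ there is a positive $\iota\in\Delta^{\downarrow m}$ (some $m$) with $B_{\mathbf{x}}(\iota)\subseteq O$. $f$ is $\iota$-continuous iff $f^{-1}(U)$ is $\iota$-open in $X$ whenever $U\subseteq Y$ is $\iota$-open. $f$ satisfies $\mathrm{ED}$ iff at every $\mathbf{c}\in X$, for every positive $\iota_1\in\mathbb{R}^{\mathbb{Z}_<}$ there is a positive $\iota_2\in\mathbb{R}^{\mathbb{Z}_<}$ with $|f(\mathbf{x})-f(\mathbf{c})|<\iota_1$ whenever $\mathbf{x}\in X$ and $|\mathbf{x}-\mathbf{c}|<\iota_2$.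 *)

theory Defs
  imports "HOL-Computational_Algebra.Formal_Laurent_Series"
begin

text \<open>The field R^{Z_<} is modelled by real fls (formal Laurent series with finitely
many negative powers, Cauchy product); epsilon is fls_X.\<close>

definition lc_pos :: "real fls \<Rightarrow> bool" where
  "lc_pos x \<longleftrightarrow> x \<noteq> 0 \<and> fls_nth x (fls_subdegree x) > 0"

definition lc_less :: "real fls \<Rightarrow> real fls \<Rightarrow> bool" where
  "lc_less x y \<longleftrightarrow> lc_pos (y - x)"

definition lc_abs :: "real fls \<Rightarrow> real fls" where
  "lc_abs x = (if lc_pos (- x) then - x else x)"

definition lc_dist :: "real fls \<Rightarrow> real fls \<Rightarrow> real fls" where
  "lc_dist x y = lc_abs (y - x)"

definition lc_ball :: "real fls set \<Rightarrow> real fls \<Rightarrow> real fls \<Rightarrow> real fls set" where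
  "lc_ball Z x r = {z \<in> Z. lc_less (lc_dist x z) r}"

definition Delta :: "nat \<Rightarrow> real fls set" where
  "Delta m = {fls_const a * fls_X ^ m | a. m \<ge> 1 \<longrightarrow> a \<noteq> 0}"

definition Delta_down :: "nat \<Rightarrow> real fls set" where
  "Delta_down m = (\<Union>n\<in>{m..}. Delta n)"

definition iota_open :: "real fls set \<Rightarrow> real fls set \<Rightarrow> bool" where
  "iota_open Z V \<longleftrightarrow> V \<subseteq> Z \<and>
     (\<forall>x\<in>V. \<exists>m \<iota>. \<iota> \<in> Delta_down m \<and> lc_pos \<iota> \<and> lc_ball Z x \<iota> \<subseteq> V)"

definition iota_continuous ::
  "real fls set \<Rightarrow> real fls set \<Rightarrow> (real fls \<Rightarrow> real fls) \<Rightarrow> bool" where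
  "iota_continuous X Y f \<longleftrightarrow>
     (\<forall>U. iota_open Y U \<longrightarrow> iota_open X {x \<in> X. f x \<in> U})"

definition ED :: "real fls set \<Rightarrow> (real fls \<Rightarrow> real fls) \<Rightarrow> bool" where
  "ED X f \<longleftrightarrow> (\<forall>c\<in>X. \<forall>\<iota>1. lc_pos \<iota>1 \<longrightarrow>
     (\<exists>\<iota>2. lc_pos \<iota>2 \<and> (\<forall>x\<in>X. lc_less (lc_abs (x - c)) \<iota>2 \<longrightarrow>
        lc_less (lc_abs (f x - f c)) \<iota>1)))"

end

theory Submission
  imports Defs
begin

text \<open>The lexicographic order makes the Laurent series an ordered field, so the metric
balls satisfy the triangle inequality and form a base of a topology. Radii from the sets
Delta_down m are no restriction, since every positive series lies above some positive
multiple of a high power of epsilon. Hence the iota-open sets are exactly the metric-open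
sets, and iota-continuity is the epsilon-delta condition ED.\<close>

lemma lc_posI:
  fixes x :: "real fls"
  assumes "\<And>n. n < d \<Longrightarrow> fls_nth x n = 0" and "fls_nth x d > 0"
  shows "lc_pos x"
proof -
  have "x \<noteq> 0" "fls_subdegree x = d"
    using assms fls_nonzeroI fls_subdegree_eqI by (metis less_irrefl)+
  then show ?thesis using assms(2) unfolding lc_pos_def by simp
qed

lemma lc_posE:
  fixes x :: "real fls"
  assumes "lc_pos x"
  shows "\<And>n. n < fls_subdegree x \<Longrightarrow> fls_nth x n = 0" and "fls_nth x (fls_subdegree x) > 0"
  using assms unfolding lc_pos_def by auto

lemma lc_pos_add:
  assumes "lc_pos a" and "lc_pos b"
  shows "lc_pos (a + b)"
proof (rule lc_posI[where d = "min (fls_subdegree a) (fls_subdegree b)"])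
  note A = lc_posE[OF assms(1)] and B = lc_posE[OF assms(2)]
  show "fls_nth (a + b) n = 0" if "n < min (fls_subdegree a) (fls_subdegree b)" for n
    using that A B by simp
  show "fls_nth (a + b) (min (fls_subdegree a) (fls_subdegree b)) > 0"
    using A B by (cases "fls_subdegree a" "fls_subdegree b" rule: linorder_cases)
      (auto simp: min_def)
qed

lemma lc_pos_or_neg:
  fixes x :: "real fls"
  assumes "x \<noteq> 0"
  shows "lc_pos x \<or> lc_pos (- x)"
proof -
  have "fls_nth x (fls_subdegree x) \<noteq> 0" using assms by simp
  then show ?thesis
    by (cases "fls_nth x (fls_subdegree x) > 0")
      (auto intro!: lc_posI[where d = "fls_subdegree x"])
qed

definition lc_nonneg :: "real fls \<Rightarrow> bool" where
  "lc_nonneg x \<longleftrightarrow> x = 0 \<or> lc_pos x"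

lemma lc_nonneg_add: "lc_nonneg a \<Longrightarrow> lc_nonneg b \<Longrightarrow> lc_nonneg (a + b)"
  unfolding lc_nonneg_def using lc_pos_add by auto

lemma lc_nonneg_pos_add: "lc_nonneg a \<Longrightarrow> lc_pos b \<Longrightarrow> lc_pos (a + b)"
  unfolding lc_nonneg_def using lc_pos_add by auto

lemma lc_less_le_trans: "lc_less a b \<Longrightarrow> lc_nonneg (c - b) \<Longrightarrow> lc_less a c"
  unfolding lc_less_def using lc_nonneg_pos_add[of "c - b" "b - a"] by simp

lemma lc_abs_cases: "lc_abs a = a \<and> lc_nonneg a \<or> lc_abs a = - a \<and> lc_pos (- a)"
  unfolding lc_abs_def lc_nonneg_def using lc_pos_or_neg[of a] by auto

lemma lc_abs_zero: "lc_abs 0 = 0"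
  unfolding lc_abs_def lc_pos_def by simp

lemma lc_abs_triangle: "lc_nonneg (lc_abs a + lc_abs b - lc_abs (a + b))"
proof -
  have minus: "lc_nonneg (lc_abs x - x)" and plus: "lc_nonneg (lc_abs x + x)" for x
    using lc_abs_cases[of x] lc_pos_add[of "- x" "- x"] lc_nonneg_add[of x x]
    unfolding lc_nonneg_def by auto
  consider "lc_abs (a + b) = a + b" | "lc_abs (a + b) = - (a + b)"
    using lc_abs_cases by blast
  then show ?thesis
  proof cases
    case 1
    then have "lc_abs a + lc_abs b - lc_abs (a + b) = (lc_abs a - a) + (lc_abs b - b)"
      by simp
    then show ?thesis using lc_nonneg_add[OF minus minus] by (simp only:)
  next
    case 2
    then have "lc_abs a + lc_abs b - lc_abs (a + b) = (lc_abs a + a) + (lc_abs b + b)"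
      by simp
    then show ?thesis using lc_nonneg_add[OF plus plus] by (simp only:)
  qed
qed

lemma lc_dist_triangle: "lc_nonneg (lc_dist x y + lc_dist y z - lc_dist x z)"
  using lc_abs_triangle[of "y - x" "z - y"] unfolding lc_dist_def by simp

lemma lc_centre_in_ball: "x \<in> Z \<Longrightarrow> lc_pos r \<Longrightarrow> x \<in> lc_ball Z x r"
  unfolding lc_ball_def lc_less_def lc_dist_def by (simp add: lc_abs_zero)

lemma lc_ball_mono: "lc_nonneg (s - r) \<Longrightarrow> lc_ball Z x r \<subseteq> lc_ball Z x s"
  unfolding lc_ball_def using lc_less_le_trans by blast

lemma lc_ball_around_point:
  assumes "y \<in> lc_ball Z x r"
  shows "lc_pos (r - lc_dist x y)" and "lc_ball Z y (r - lc_dist x y) \<subseteq> lc_ball Z x r"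
proof -
  show "lc_pos (r - lc_dist x y)" using assms unfolding lc_ball_def lc_less_def by simp
  show "lc_ball Z y (r - lc_dist x y) \<subseteq> lc_ball Z x r"
  proof
    fix z assume "z \<in> lc_ball Z y (r - lc_dist x y)"
    then have "z \<in> Z" and "lc_pos (r - lc_dist x y - lc_dist y z)"
      unfolding lc_ball_def lc_less_def by auto
    then have "lc_pos ((lc_dist x y + lc_dist y z - lc_dist x z) + (r - lc_dist x y - lc_dist y z))"
      using lc_nonneg_pos_add lc_dist_triangle by blast
    then show "z \<in> lc_ball Z x r"
      using \<open>z \<in> Z\<close> unfolding lc_ball_def lc_less_def by (simp add: algebra_simps)
  qed
qed

lemma lc_pos_above_Delta_down:
  fixes r :: "real fls"
  assumes "lc_pos r"
  shows "\<exists>m d. d \<in> Delta_down m \<and> lc_pos d \<and> lc_pos (r - d)"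
proof -
  define k where "k = fls_subdegree r"
  define m :: nat where "m = nat (\<bar>k\<bar> + 1)"
  define d :: "real fls" where "d = fls_const 1 * fls_X ^ m"
  have "k < int m" unfolding m_def by simp
  have "d \<in> Delta m"
    unfolding Delta_def d_def by auto
  then have "d \<in> Delta_down m"
    unfolding Delta_down_def by auto
  moreover have "lc_pos d"
    unfolding d_def by (rule lc_posI[where d = "int m"]) auto
  moreover have "lc_pos (r - d)"
  proof (rule lc_posI[where d = k])
    show "fls_nth (r - d) n = 0" if "n < k" for n
      using that lc_posE[OF assms] \<open>k < int m\<close> unfolding d_def k_def by auto
    show "fls_nth (r - d) k > 0"
      using lc_posE[OF assms] \<open>k < int m\<close> unfolding d_def k_def by auto
  qed
  ultimately show ?thesis by blast
qed

lemma iota_open_iff: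
  "iota_open Z V \<longleftrightarrow> V \<subseteq> Z \<and> (\<forall>x\<in>V. \<exists>r. lc_pos r \<and> lc_ball Z x r \<subseteq> V)"
proof -
  have "\<exists>m d. d \<in> Delta_down m \<and> lc_pos d \<and> lc_ball Z x d \<subseteq> V"
    if "lc_pos r" and "lc_ball Z x r \<subseteq> V" for x r
  proof -
    obtain m d where d: "d \<in> Delta_down m" "lc_pos d" "lc_pos (r - d)"
      using lc_pos_above_Delta_down[OF \<open>lc_pos r\<close>] by blast
    then have "lc_ball Z x d \<subseteq> lc_ball Z x r"
      by (intro lc_ball_mono) (simp add: lc_nonneg_def)
    then show ?thesis using d that by blast
  qed
  then show ?thesis unfolding iota_open_def by blast
qed

lemma iota_open_lc_ball: "iota_open Z (lc_ball Z x r)"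
  unfolding iota_open_iff using lc_ball_around_point by (fastforce simp: lc_ball_def)

lemma ED_iff_balls:
  assumes "f ` X \<subseteq> Y"
  shows "ED X f \<longleftrightarrow>
    (\<forall>c\<in>X. \<forall>r. lc_pos r \<longrightarrow> (\<exists>s. lc_pos s \<and> f ` lc_ball X c s \<subseteq> lc_ball Y (f c) r))"
proof -
  have "f ` lc_ball X c s \<subseteq> lc_ball Y (f c) r \<longleftrightarrow>
      (\<forall>x\<in>X. lc_less (lc_abs (x - c)) s \<longrightarrow> lc_less (lc_abs (f x - f c)) r)" for c r s
    using assms unfolding lc_ball_def lc_dist_def by auto
  then show ?thesis unfolding ED_def by simp
qed

lemma iota_continuous_imp_ball_continuity:
  assumes "f ` X \<subseteq> Y" and "iota_continuous X Y f" and "c \<in> X" and "lc_pos r"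
  shows "\<exists>s. lc_pos s \<and> f ` lc_ball X c s \<subseteq> lc_ball Y (f c) r"
proof -
  have "iota_open X {x \<in> X. f x \<in> lc_ball Y (f c) r}"
    using assms(2) iota_open_lc_ball unfolding iota_continuous_def by blast
  moreover have "c \<in> {x \<in> X. f x \<in> lc_ball Y (f c) r}"
    using assms by (auto intro: lc_centre_in_ball)
  ultimately obtain s where "lc_pos s" "lc_ball X c s \<subseteq> {x \<in> X. f x \<in> lc_ball Y (f c) r}"
    unfolding iota_open_iff by blast
  then show ?thesis by blast
qed

lemma ball_continuity_imp_iota_continuous:
  assumes "\<And>c r. c \<in> X \<Longrightarrow> lc_pos r \<Longrightarrow>
    \<exists>s. lc_pos s \<and> f ` lc_ball X c s \<subseteq> lc_ball Y (f c) r"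
  shows "iota_continuous X Y f"
  unfolding iota_continuous_def
proof (intro allI impI)
  fix U assume "iota_open Y U"
  have "\<exists>s. lc_pos s \<and> lc_ball X c s \<subseteq> {x \<in> X. f x \<in> U}" if "c \<in> X" "f c \<in> U" for c
  proof -
    obtain r where "lc_pos r" "lc_ball Y (f c) r \<subseteq> U"
      using \<open>iota_open Y U\<close> \<open>f c \<in> U\<close> unfolding iota_open_iff by blast
    moreover obtain s where "lc_pos s" "f ` lc_ball X c s \<subseteq> lc_ball Y (f c) r"
      using assms \<open>c \<in> X\<close> \<open>lc_pos r\<close> by blast
    ultimately show ?thesis by (auto simp: lc_ball_def)
  qed
  then show "iota_open X {x \<in> X. f x \<in> U}"
    unfolding iota_open_iff by blast
qed

theorem mainTheorem14:
  fixes X Y :: "real fls set" and f :: "real fls \<Rightarrow> real fls"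
  assumes "f ` X \<subseteq> Y"
  shows "iota_continuous X Y f \<longleftrightarrow> ED X f"
  unfolding ED_iff_balls[OF assms]
proof (intro iffI ballI allI impI)
  show "\<exists>s. lc_pos s \<and> f ` lc_ball X c s \<subseteq> lc_ball Y (f c) r"
    if "iota_continuous X Y f" "c \<in> X" "lc_pos r" for c r
    using iota_continuous_imp_ball_continuity[OF assms that] .
qed (rule ball_continuity_imp_iota_continuous, blast)

end
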